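(* Let $n\ge 2$ and let $P=[p_1,\ldots,p_n]$ be an arithmetically progressed permutation with ratio $k$ such that $p_1\notin\{1,k+1,n\}$. Then the associated ternary string $\mathsf{T}_P$ is the unique string of length $n$ over $\{\mathtt{a},\mathtt{b},\mathtt{c}\}$ whose suffix array is $P$.
   Context: Alphabet $\{\mathtt{a}<\mathtt{b}<\mathtt{c}\}$, lexicographic order with a proper prefix smaller than the longer string; suffix array $\mathsf{SA}_{\mathsf{T}}$: permutation of $[1..n]$ such that $\mathsf{T}[\mathsf{SA}_{\mathsf{T}}[i]..n]$ is the $i$-th smallest suffix. $x\bmod n$ denotes the representative of $x$ modulo $n$ in $[1..n]$. An arithmetically progressed permutation of length $n$ with ratio $k\in[1..n-1]$ is a permutation $P=[p_1,\ldots,p_n]$ of $[1..n]$ with $p_{i+1}=p_i+k\bmod n$. Ternary string associated with $P$: cut $P$ immediately after the entry $n-k$ and immediately after the entry $(p_1-k-1)\bmod n$, giving consecutive possibly empty blocks $A,B,C$ with $P=ABC$; set $\mathsf{T}_P[p_i]=\mathtt{a},\mathtt{b},\mathtt{c}$ according as $p_i$ lies in $A$, $B$, $C$. *)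

theory Defs
  imports Main
begin

text \<open>Letters a < b < c are encoded as the natural numbers 0 < 1 < 2.
  Strings are lists; position j (1-indexed) is S ! (j - 1).
  A permutation P = [p_1,...,p_n] is a list with P ! (i - 1) = p_i.\<close>

definition ternary :: "nat list \<Rightarrow> bool" where
  "ternary S \<longleftrightarrow> set S \<subseteq> {0, 1, 2}"

definition modn :: "int \<Rightarrow> nat \<Rightarrow> nat" where
  "modn x n = nat ((x - 1) mod int n + 1)"

definition suffix_at :: "nat list \<Rightarrow> nat \<Rightarrow> nat list" where
  "suffix_at S j = drop (j - 1) S"

definition is_suffix_array :: "nat list \<Rightarrow> nat list \<Rightarrow> bool" where
  "is_suffix_array S P \<longleftrightarrow>
     length P = length S \<and> distinct P \<and> set P = {1..length S} \<and>
     (\<forall>i. Suc i < length P \<longrightarrow>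
        ord_class.lexordp (suffix_at S (P ! i)) (suffix_at S (P ! Suc i)))"

definition is_perm :: "nat list \<Rightarrow> bool" where
  "is_perm P \<longleftrightarrow> distinct P \<and> set P = {1..length P}"

definition arith_prog_perm :: "nat list \<Rightarrow> nat \<Rightarrow> bool" where
  "arith_prog_perm P k \<longleftrightarrow> is_perm P \<and> 1 \<le> k \<and> k \<le> length P - 1 \<and>
     (\<forall>i. Suc i < length P \<longrightarrow> P ! Suc i = modn (int (P ! i) + int k) (length P))"

definition pos :: "nat list \<Rightarrow> nat \<Rightarrow> nat" where
  "pos P j = (LEAST i. i < length P \<and> P ! i = j)"

text \<open>Ternary string associated with P: cut P immediately after the entry n - k
  and immediately after the entry (p_1 - k - 1) mod n, giving blocks A, B, C;
  entries in A get a (=0), in B get b (=1), in C get c (=2).\<close>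
definition assoc_string :: "nat list \<Rightarrow> nat \<Rightarrow> nat list" where
  "assoc_string P k =
    (let n = length P;
         i1 = pos P (n - k);
         i2 = pos P (modn (int (hd P) - int k - 1) n);
         c1 = min i1 i2; c2 = max i1 i2
     in map (\<lambda>j. if pos P j \<le> c1 then 0 else if pos P j \<le> c2 then 1 else 2) [1..<n+1])"

end

theory Submission
  imports Defs "HOL-Number_Theory.Cong"
begin

text \<open>Write r = pos P for the rank of a text position. Since consecutive entries of P differ by k
  modulo n, we get r (v + 1) = (r v + m) mod n with m k = 1 (mod n): passing from a suffix to the
  next one shifts its rank by m. Such a shift preserves the order of two ranks unless exactly one of
  them wraps around, i.e. unless they lie on opposite sides of n - m - 1, the rank of
  (p_1 - k - 1) mod n. Hence, if P is cut there and just before the one-letter suffix n (after the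
  entry n - k), two suffixes with equal first letters are ordered like their tails, and T_P has
  suffix array P.

  Conversely, the first letters read along any suffix array are nondecreasing, and they must
  increase at both cuts: before the one-letter suffix n, and before p_1 - 1, whose tail is the
  smallest suffix p_1. With only three letters available this determines the string.\<close>

lemma suffix_at_Cons:
  assumes "1 \<le> a" "a \<le> length S"
  shows "suffix_at S a = S ! (a - 1) # suffix_at S (a + 1)"
proof -
  obtain j where "a = Suc j" "j < length S" using assms by (cases a) auto
  then show ?thesis unfolding suffix_at_def by (simp add: Cons_nth_drop_Suc)
qed

lemma suffix_at_Suc_eq_Nil_iff: "suffix_at S (Suc a) = [] \<longleftrightarrow> length S \<le> a"
  unfolding suffix_at_def by auto

lemma pos_nth:
  assumes "distinct P" "i < length P"
  shows "pos P (P ! i) = i"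
  using assms unfolding pos_def by (intro Least_equality) (auto simp: nth_eq_iff_index_eq)

lemma nth_pos:
  assumes "v \<in> set P"
  shows "pos P v < length P" "P ! pos P v = v"
proof -
  obtain i where "i < length P" "P ! i = v" using assms by (auto simp: in_set_conv_nth)
  then show "pos P v < length P" "P ! pos P v = v"
    unfolding pos_def by (auto intro: LeastI2_wellorder[where a = i])
qed

lemma lexordp_suffix_at_if_rank:
  fixes S :: "nat list" and r :: "nat \<Rightarrow> nat"
  assumes step: "\<And>a b. a \<in> {1..length S} \<Longrightarrow> b \<in> {1..length S} \<Longrightarrow> r a < r b \<Longrightarrow>
      S ! (a - 1) < S ! (b - 1) \<or>
      S ! (a - 1) = S ! (b - 1) \<and> (a = length S \<or> b < length S \<and> r (a + 1) < r (b + 1))"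
  shows "a \<in> {1..length S} \<Longrightarrow> b \<in> {1..length S} \<Longrightarrow> r a < r b \<Longrightarrow>
      ord_class.lexordp (suffix_at S a) (suffix_at S b)"
proof (induction "length S - a" arbitrary: a b rule: less_induct)
  case less
  then have a: "suffix_at S a = S ! (a - 1) # suffix_at S (a + 1)"
    and b: "suffix_at S b = S ! (b - 1) # suffix_at S (b + 1)"
    by (simp_all add: suffix_at_Cons)
  from step[OF less.prems] consider "S ! (a - 1) < S ! (b - 1)"
    | "S ! (a - 1) = S ! (b - 1)" "a = length S"
    | "S ! (a - 1) = S ! (b - 1)" "a < length S" "b < length S" "r (a + 1) < r (b + 1)"
    using less.prems by fastforce
  then show ?case
  proof cases
    case 2
    with less.prems have "b < length S" by (metis atLeastAtMost_iff le_neq_implies_less less_irrefl)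
    then have "suffix_at S (a + 1) = []" "suffix_at S (b + 1) \<noteq> []"
      using 2 by (simp_all add: suffix_at_Suc_eq_Nil_iff)
    then show ?thesis unfolding a b using 2(1) by (auto simp: neq_Nil_conv)
  next
    case 3
    then have "ord_class.lexordp (suffix_at S (a + 1)) (suffix_at S (b + 1))"
      using less.prems by (intro less.hyps) auto
    with 3 show ?thesis by (simp add: a b)
  qed (simp add: a b)
qed

lemma is_suffix_array_if_rank:
  fixes S :: "nat list"
  assumes "is_perm P" "length P = length S"
    and "\<And>a b. a \<in> {1..length S} \<Longrightarrow> b \<in> {1..length S} \<Longrightarrow> pos P a < pos P b \<Longrightarrow>
      S ! (a - 1) < S ! (b - 1) \<or>
      S ! (a - 1) = S ! (b - 1) \<and> (a = length S \<or> b < length S \<and> pos P (a + 1) < pos P (b + 1))"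
  shows "is_suffix_array S P"
proof -
  have "ord_class.lexordp (suffix_at S (P ! i)) (suffix_at S (P ! Suc i))" if "Suc i < length P" for i
    using assms(1,2) that
    by (intro lexordp_suffix_at_if_rank[where r = "pos P", OF assms(3)])
      (auto simp: pos_nth is_perm_def)
  with assms(1,2) show ?thesis
    unfolding is_suffix_array_def is_perm_def by auto
qed

lemma sorted_wrt_suffix_array:
  assumes "is_suffix_array S P"
  shows "sorted_wrt (\<lambda>a b. ord_class.lexordp (suffix_at S a) (suffix_at S b)) P"
proof -
  have "transp (\<lambda>a b. ord_class.lexordp (suffix_at S a) (suffix_at S b))"
    by (auto intro: transpI lexordp_trans)
  with assms show ?thesis
    unfolding is_suffix_array_def by (simp add: sorted_wrt_iff_nth_Suc_transp)
qed

lemma suffix_array_first_letters_sorted: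
  assumes "is_suffix_array S P"
  shows "sorted (map (\<lambda>a. S ! (a - 1)) P)"
proof -
  have "S ! (a - 1) \<le> S ! (b - 1)" if "a \<in> set P" "b \<in> set P"
    "ord_class.lexordp (suffix_at S a) (suffix_at S b)" for a b
    using that assms unfolding is_suffix_array_def by (auto simp: suffix_at_Cons)
  then show ?thesis
    using sorted_wrt_suffix_array[OF assms] by (auto simp: sorted_map elim: sorted_wrt_mono_rel[rotated])
qed

lemma suffix_array_equal_letters_imp_lexordp_Suc:
  assumes "is_suffix_array S P" "i < j" "j < length P" "S ! (P ! i - 1) = S ! (P ! j - 1)"
  shows "ord_class.lexordp (suffix_at S (P ! i + 1)) (suffix_at S (P ! j + 1))"
proof -
  have "P ! i \<in> {1..length S}" "P ! j \<in> {1..length S}"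
    using assms unfolding is_suffix_array_def by (auto dest: nth_mem)
  moreover have "ord_class.lexordp (suffix_at S (P ! i)) (suffix_at S (P ! j))"
    using sorted_wrt_suffix_array[OF assms(1)] assms(2,3) by (rule sorted_wrt_nth_less)
  ultimately show ?thesis using assms(4) by (simp add: suffix_at_Cons)
qed

lemma suffix_array_letter_less_if_next_last:
  assumes sa: "is_suffix_array S P" and i: "Suc i < length P" and last: "P ! Suc i = length S"
  shows "S ! (P ! i - 1) < S ! (P ! Suc i - 1)"
proof -
  have "S ! (P ! i - 1) \<le> S ! (P ! Suc i - 1)"
    using suffix_array_first_letters_sorted[OF sa] i by (auto dest: sorted_nth_mono[of _ i "Suc i"])
  moreover have "S ! (P ! i - 1) \<noteq> S ! (P ! Suc i - 1)"
  proof
    assume "S ! (P ! i - 1) = S ! (P ! Suc i - 1)"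
    from suffix_array_equal_letters_imp_lexordp_Suc[OF sa _ i this] last
    have "ord_class.lexordp (suffix_at S (P ! i + 1)) (suffix_at S (length S + 1))" by simp
    moreover have "suffix_at S (length S + 1) = []" by (simp add: suffix_at_Suc_eq_Nil_iff)
    ultimately show False by simp
  qed
  ultimately show ?thesis by simp
qed

lemma suffix_array_letter_less_if_next_precedes_first:
  assumes sa: "is_suffix_array S P" and i: "Suc i < length P"
    and pred: "P ! Suc i + 1 = P ! 0" and not_last: "P ! i < length S"
  shows "S ! (P ! i - 1) < S ! (P ! Suc i - 1)"
proof -
  have sorted: "sorted_wrt (\<lambda>a b. ord_class.lexordp (suffix_at S a) (suffix_at S b)) P"
    using sorted_wrt_suffix_array[OF sa] .
  have perm: "distinct P" "set P = {1..length S}" "length P = length S"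
    using sa unfolding is_suffix_array_def by auto
  have "S ! (P ! i - 1) \<le> S ! (P ! Suc i - 1)"
    using suffix_array_first_letters_sorted[OF sa] i by (auto dest: sorted_nth_mono[of _ i "Suc i"])
  moreover have "S ! (P ! i - 1) \<noteq> S ! (P ! Suc i - 1)"
  proof
    assume "S ! (P ! i - 1) = S ! (P ! Suc i - 1)"
    from suffix_array_equal_letters_imp_lexordp_Suc[OF sa _ i this] pred
    have less: "ord_class.lexordp (suffix_at S (P ! i + 1)) (suffix_at S (P ! 0))" by simp
    have "P ! i + 1 \<in> set P" using perm not_last by auto
    then obtain j where j: "j < length P" "P ! j = P ! i + 1" by (auto simp: in_set_conv_nth)
    have "j \<noteq> 0"
      using j pred i perm(1) by (metis Suc_n_not_n add_right_cancel nth_eq_iff_index_eq Suc_lessD)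
    then have "ord_class.lexordp (suffix_at S (P ! 0)) (suffix_at S (P ! i + 1))"
      using sorted_wrt_nth_less[OF sorted, of 0 j] j by simp
    with less show False by (rule lexordp_antisym)
  qed
  ultimately show ?thesis by simp
qed

definition block_letter :: "nat \<Rightarrow> nat \<Rightarrow> nat \<Rightarrow> nat" where
  "block_letter c1 c2 i = (if i \<le> c1 then 0 else if i \<le> c2 then 1 else 2)"

lemma block_letter_less:
  assumes "c1 \<le> c2" "c \<in> {c1, c2}" "x \<le> c" "c < y"
  shows "block_letter c1 c2 x < block_letter c1 c2 y"
  using assms unfolding block_letter_def by auto

lemma block_letter_mono: "x \<le> y \<Longrightarrow> block_letter c1 c2 x \<le> block_letter c1 c2 y"
  unfolding block_letter_def by auto

lemma sorted_ternary_eq_block_letter: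
  fixes L :: "nat list"
  assumes "sorted L" "ternary L" "c1 < c2" "c2 + 1 < length L"
    and "L ! c1 < L ! (c1 + 1)" "L ! c2 < L ! (c2 + 1)" "i < length L"
  shows "L ! i = block_letter c1 c2 i"
proof -
  have mono: "L ! x \<le> L ! y" if "x \<le> y" "y < length L" for x y
    using assms(1) that by (rule sorted_nth_mono)
  have "L ! (c2 + 1) \<le> 2"
    using assms(2,4) unfolding ternary_def by (auto dest: nth_mem)
  moreover have "L ! (c1 + 1) \<le> L ! c2" using assms(3,4) by (intro mono) auto
  ultimately have "L ! c1 = 0" "L ! (c1 + 1) = 1" "L ! c2 = 1" "L ! (c2 + 1) = 2"
    using assms(5,6) by auto
  moreover have "L ! i \<le> 2" using assms(2,7) unfolding ternary_def by (auto dest: nth_mem)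
  ultimately show ?thesis
    using mono[of i c1] mono[of "c1 + 1" i] mono[of i c2] mono[of "c2 + 1" i] assms(3,4,7)
    unfolding block_letter_def by (auto split: if_splits)
qed

lemma modn_cong: "0 < n \<Longrightarrow> [int (modn x n) = x] (mod int n)"
  unfolding modn_def cong_def by (simp add: mod_simps)

lemma modn_in_range: "0 < n \<Longrightarrow> modn x n \<in> {1..n}"
proof -
  assume "0 < n"
  then have "0 \<le> (x - 1) mod int n" "(x - 1) mod int n < int n" by simp_all
  then show ?thesis unfolding modn_def by auto
qed

lemma cong_imp_eq_in_range:
  fixes v w :: nat
  assumes "[v = w] (mod n)" "v \<in> {1..n}" "w \<in> {1..n}"
  shows "v = w"
proof -
  have "[v - 1 = w - 1] (mod n)"
    using assms cong_add_rcancel_nat[of "v - 1" 1 "w - 1" n] by simp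
  then show ?thesis
    using assms(2,3) cong_less_imp_eq_nat[of "v - 1" n "w - 1"] by fastforce
qed

lemma add_mod_less_add_mod:
  fixes x y m n :: nat
  assumes "x < y" "y < n" "m \<le> n" "x + m < n \<longleftrightarrow> y + m < n"
  shows "(x + m) mod n < (y + m) mod n"
  using assms by (auto simp: mod_if)

locale arith_prog_permutation =
  fixes P :: "nat list" and k :: nat
  assumes arith_prog: "arith_prog_perm P k"
begin

abbreviation "n \<equiv> length P"

lemma distinct_P: "distinct P" and set_P: "set P = {1..n}" and k_pos: "0 < k" and k_less: "k < n"
  and nth_Suc: "\<And>i. Suc i < n \<Longrightarrow> P ! Suc i = modn (int (P ! i) + int k) n"
  using arith_prog unfolding arith_prog_perm_def is_perm_def by auto

lemma P_not_Nil [simp]: "P \<noteq> []"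
  using k_less by auto

lemma is_perm_P: "is_perm P"
  using distinct_P set_P unfolding is_perm_def by simp

lemma nth_in_range: "i < n \<Longrightarrow> P ! i \<in> {1..n}"
  using set_P nth_mem by blast

lemma nth_cong: "i < n \<Longrightarrow> [P ! i = P ! 0 + i * k] (mod n)"
proof (induction i)
  case (Suc i)
  have "[int (P ! Suc i) = int (P ! i) + int k] (mod int n)"
    using Suc.prems by (simp add: nth_Suc) (intro modn_cong, auto)
  then have "[P ! Suc i = P ! i + k] (mod n)"
    by (simp add: cong_int_iff[symmetric])
  also have "[P ! i + k = P ! 0 + i * k + k] (mod n)"
    using Suc by (intro cong_add) auto
  finally show ?case by (simp add: algebra_simps)
qed simp

lemma nth_eq_iff_cong:
  assumes "i < n" "v \<in> {1..n}"
  shows "P ! i = v \<longleftrightarrow> [P ! 0 + i * k = v] (mod n)"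
  using assms nth_cong[OF assms(1)] nth_in_range[OF assms(1)]
  by (metis cong_imp_eq_in_range cong_sym cong_trans)

lemma pos_eq_iff_cong:
  assumes "i < n" "v \<in> {1..n}"
  shows "pos P v = i \<longleftrightarrow> [P ! 0 + i * k = v] (mod n)"
  using assms nth_pos[of v P] pos_nth[OF distinct_P assms(1)] set_P nth_eq_iff_cong
  by metis

definition k_inv :: nat where
  "k_inv = pos P (P ! 0 mod n + 1)"

lemma k_inv_less: "k_inv < n" and k_inv_cong: "[k_inv * k = 1] (mod n)"
proof -
  have v: "P ! 0 mod n + 1 \<in> {1..n}" by (simp add: Suc_le_eq)
  then show "k_inv < n" unfolding k_inv_def using nth_pos[of _ P] set_P by blast
  with v have "[P ! 0 + k_inv * k = P ! 0 mod n + 1] (mod n)"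
    unfolding k_inv_def using pos_eq_iff_cong by blast
  then have "[P ! 0 + k_inv * k = P ! 0 + 1] (mod n)"
    by (metis cong_add_rcancel_nat cong_mod_right cong_refl cong_add cong_trans)
  then show "[k_inv * k = 1] (mod n)" using cong_add_lcancel_nat by (metis add.commute)
qed

lemma k_inv_pos: "0 < k_inv"
proof (rule ccontr)
  assume "\<not> 0 < k_inv"
  then have "[0 = 1] (mod n)" using k_inv_cong by simp
  then show False using k_pos k_less by (simp add: cong_def)
qed

lemma pos_Suc:
  assumes "v \<in> {1..<n}"
  shows "pos P (Suc v) = (pos P v + k_inv) mod n"
proof -
  have "pos P v < n" using assms set_P nth_pos[of v P] by auto
  then have "[P ! 0 + pos P v * k = v] (mod n)" using assms pos_eq_iff_cong[of "pos P v" v] by auto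
  then have shifted: "[P ! 0 + pos P v * k + k_inv * k = v + 1] (mod n)"
    using k_inv_cong by (rule cong_add)
  have "[(pos P v + k_inv) mod n * k = (pos P v + k_inv) * k] (mod n)"
    by (intro cong_mult) simp_all
  then have "[P ! 0 + (pos P v + k_inv) mod n * k = P ! 0 + pos P v * k + k_inv * k] (mod n)"
    by (metis cong_add_lcancel_nat add.assoc add_mult_distrib)
  with shifted show ?thesis
    using assms k_less by (subst pos_eq_iff_cong) (auto intro: cong_trans mod_less_divisor)
qed

end

locale ternary_arith_prog_permutation = arith_prog_permutation +
  assumes first_entry: "hd P \<notin> {1, k + 1, length P}"
begin

lemma hd_P: "hd P = P ! 0"
  using k_less by (cases P) auto

lemma first_entry_bounds: "2 \<le> P ! 0" "P ! 0 < n"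
proof -
  have "P ! 0 \<in> {1..n}" by (rule nth_in_range) simp
  then show "2 \<le> P ! 0" "P ! 0 < n" using first_entry by (auto simp: hd_P)
qed

lemma pred_first_in_set: "P ! 0 - 1 \<in> set P"
  using set_P first_entry_bounds by auto

lemma last_in_range: "n \<in> {1..n}"
  using k_less by simp

lemma pos_last_bounds: "0 < pos P n" "pos P n < n"
proof -
  show "pos P n < n" using nth_pos[of n P] set_P last_in_range by blast
  show "0 < pos P n"
  proof (rule ccontr)
    assume "\<not> 0 < pos P n"
    then have "P ! 0 = n" using nth_pos(2)[of n P] set_P last_in_range by simp
    then show False using first_entry_bounds by simp
  qed
qed

lemma pos_last_minus_k: "pos P (n - k) = pos P n - 1"
proof -
  have "[P ! 0 + pos P n * k = n] (mod n)"
    using pos_eq_iff_cong[OF pos_last_bounds(2) last_in_range] by simp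
  moreover obtain j where "pos P n = Suc j" using pos_last_bounds(1) gr0_implies_Suc by blast
  ultimately have "[P ! 0 + (pos P n - 1) * k + k = n - k + k] (mod n)"
    using k_less by (simp add: algebra_simps)
  then have "[P ! 0 + (pos P n - 1) * k = n - k] (mod n)"
    by (simp add: cong_add_rcancel_nat)
  then show ?thesis
    using pos_last_bounds k_pos k_less by (subst pos_eq_iff_cong) auto
qed

lemma pos_pred_first: "pos P (P ! 0 - 1) = n - k_inv"
proof -
  have v: "P ! 0 - 1 \<in> {1..<n}" using first_entry_bounds by auto
  then have "pos P (P ! 0 - 1) < n" using nth_pos(1)[of _ P] set_P by auto
  moreover have "(pos P (P ! 0 - 1) + k_inv) mod n = 0"
    using pos_Suc[OF v] pos_nth[OF distinct_P, of 0] first_entry_bounds by simp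
  ultimately show ?thesis using k_inv_less k_inv_pos by (auto simp: mod_if split: if_splits)
qed

lemma second_cut_entry:
  defines "w \<equiv> modn (int (hd P) - int k - 1) n"
  shows "pos P w = n - k_inv - 1" "w < n"
proof -
  have n_pos: "0 < n" by simp
  have w_cong: "[int w = int (P ! 0) - int k - 1] (mod int n)"
    unfolding w_def hd_P using modn_cong[OF n_pos] by blast
  have w_range: "w \<in> {1..n}" unfolding w_def using modn_in_range[OF n_pos] .
  define j where "j = n - k_inv - 1"
  have j: "Suc j < n" "Suc j = n - k_inv" using k_inv_less k_inv_pos unfolding j_def by auto
  have "P ! Suc j = P ! 0 - 1"
    using j(2) pos_pred_first nth_pos(2)[OF pred_first_in_set] by simp
  then have "[int (P ! 0 - 1) = int (P ! j) + int k] (mod int n)"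
    using nth_Suc[OF j(1)] modn_cong[OF n_pos] by metis
  then have "[int (P ! j) = int (P ! 0) - int k - 1] (mod int n)"
    using first_entry_bounds by (simp add: of_nat_diff cong_iff_dvd_diff dvd_diff_commute algebra_simps)
  then have "[int (P ! j) = int w] (mod int n)"
    using w_cong by (metis cong_sym cong_trans)
  then have "P ! j = w"
    using cong_imp_eq_in_range nth_in_range j(1) w_range by (simp add: cong_int_iff)
  then show "pos P w = n - k_inv - 1"
    using pos_nth[OF distinct_P] j(1) unfolding j_def by fastforce
  show "w < n"
  proof (rule ccontr)
    assume "\<not> w < n"
    with w_range w_cong have "[0 = int (P ! 0) - int k - 1] (mod int n)"
      by (auto simp: cong_def)
    then have "[int (k + 1) = int (P ! 0)] (mod int n)"
      by (auto simp: cong_def mod_eq_dvd_iff algebra_simps)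
    then have "[k + 1 = P ! 0] (mod n)" by (simp only: cong_int_iff)
    then have "k + 1 = P ! 0"
      using k_less first_entry_bounds by (intro cong_imp_eq_in_range) auto
    then show False using first_entry by (simp add: hd_P)
  qed
qed

definition cut1 :: nat where "cut1 = min (pos P n - 1) (n - k_inv - 1)"
definition cut2 :: nat where "cut2 = max (pos P n - 1) (n - k_inv - 1)"

lemma cuts_mem: "pos P n - 1 \<in> {cut1, cut2}" "n - k_inv - 1 \<in> {cut1, cut2}"
  unfolding cut1_def cut2_def by auto

lemma cuts_bounds: "cut1 < cut2" "cut2 + 1 < n"
proof -
  have "pos P n \<noteq> pos P (P ! 0 - 1)"
  proof
    assume "pos P n = pos P (P ! 0 - 1)"
    then have "n = P ! 0 - 1"
      using nth_pos(2)[OF pred_first_in_set] nth_pos(2)[of n P] set_P last_in_range by simp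
    then show False using first_entry_bounds by simp
  qed
  then have "pos P n \<noteq> n - k_inv" unfolding pos_pred_first .
  then show "cut1 < cut2" "cut2 + 1 < n"
    using pos_last_bounds k_inv_pos k_inv_less unfolding cut1_def cut2_def by auto
qed

lemma nth_assoc_string:
  assumes "j \<in> {1..n}"
  shows "assoc_string P k ! (j - 1) = block_letter cut1 cut2 (pos P j)"
proof -
  have "assoc_string P k = map (\<lambda>j. block_letter cut1 cut2 (pos P j)) [1..<n+1]"
    unfolding assoc_string_def Let_def pos_last_minus_k second_cut_entry(1)
    unfolding block_letter_def cut1_def cut2_def ..
  with assms show ?thesis by (auto simp del: upt_Suc)
qed

lemma length_assoc_string: "length (assoc_string P k) = n"
  unfolding assoc_string_def Let_def by (simp add: Suc_le_eq)

lemma ternary_assoc_string: "ternary (assoc_string P k)"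
  unfolding assoc_string_def ternary_def Let_def by auto

lemma is_suffix_array_assoc_string: "is_suffix_array (assoc_string P k) P"
proof (rule is_suffix_array_if_rank[OF is_perm_P])
  let ?T = "assoc_string P k" and ?blk = "block_letter cut1 cut2"
  show "length P = length ?T" by (simp add: length_assoc_string)
  fix a b
  assume "a \<in> {1..length ?T}" "b \<in> {1..length ?T}" and ab: "pos P a < pos P b"
  then have a: "a \<in> {1..n}" and b: "b \<in> {1..n}" by (simp_all add: length_assoc_string)
  have pos_b: "pos P b < n" using b set_P nth_pos(1) by blast
  have not_between: "\<not> (pos P a \<le> c \<and> c < pos P b)"
    if "c \<in> {cut1, cut2}" "?blk (pos P a) = ?blk (pos P b)" for c
    using that block_letter_less[of cut1 cut2 c] cuts_bounds by fastforce
  show "?T ! (a - 1) < ?T ! (b - 1) \<or> ?T ! (a - 1) = ?T ! (b - 1) \<and>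
      (a = length ?T \<or> b < length ?T \<and> pos P (a + 1) < pos P (b + 1))"
  proof (cases "?blk (pos P a) = ?blk (pos P b)")
    case False
    then show ?thesis
      using block_letter_mono[of "pos P a" "pos P b" cut1 cut2] ab nth_assoc_string[OF a]
        nth_assoc_string[OF b]
      by simp
  next
    case True
    have "b < n" if "a < n"
    proof (rule ccontr)
      assume "\<not> b < n"
      with b have "b = n" by simp
      with ab have "pos P a \<le> pos P n - 1 \<and> pos P n - 1 < pos P b" by auto
      with not_between[OF cuts_mem(1) True] show False ..
    qed
    moreover have "pos P (a + 1) < pos P (b + 1)" if "a < n" "b < n"
    proof -
      have "pos P a + k_inv < n \<longleftrightarrow> pos P b + k_inv < n"
        using not_between[OF cuts_mem(2) True] ab pos_b by auto
      then show ?thesis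
        using that a b ab pos_b k_inv_less by (simp add: pos_Suc add_mod_less_add_mod)
    qed
    ultimately show ?thesis
      using True a b nth_assoc_string[OF a] nth_assoc_string[OF b]
      by (auto simp: length_assoc_string)
  qed
qed

lemma suffix_array_letter_less_at_cuts:
  assumes sa: "is_suffix_array S P" and c: "c \<in> {cut1, cut2}"
  shows "S ! (P ! c - 1) < S ! (P ! Suc c - 1)"
proof -
  have len: "length S = n" using sa unfolding is_suffix_array_def by simp
  consider "c = pos P n - 1" | "c = n - k_inv - 1"
    using c unfolding cut1_def cut2_def by (metis insertE min_def max_def singletonD)
  then show ?thesis
  proof cases
    case 1
    then have "Suc c = pos P n" using pos_last_bounds by simp
    moreover have "P ! pos P n = n" using nth_pos(2)[of n P] set_P last_in_range by simp
    ultimately show ?thesis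
      using pos_last_bounds len by (intro suffix_array_letter_less_if_next_last[OF sa]) auto
  next
    case 2
    define w where "w = modn (int (hd P) - int k - 1) n"
    have "Suc c = pos P (P ! 0 - 1)" using 2 pos_pred_first k_inv_pos k_inv_less by simp
    moreover have "P ! pos P (P ! 0 - 1) = P ! 0 - 1"
      using nth_pos(2)[OF pred_first_in_set] .
    moreover have "P ! c = w" "w < n"
      using 2 second_cut_entry[folded w_def] nth_pos(2)[of w P] set_P w_def modn_in_range by auto
    ultimately show ?thesis
      using first_entry_bounds k_inv_pos len 2
      by (intro suffix_array_letter_less_if_next_precedes_first[OF sa]) auto
  qed
qed

lemma suffix_array_unique:
  assumes len: "length S = n" and tern: "ternary S" and sa: "is_suffix_array S P"
  shows "S = assoc_string P k"
proof (rule nth_equalityI)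
  define L where "L = map (\<lambda>a. S ! (a - 1)) P"
  have L_nth: "L ! i = S ! (P ! i - 1)" if "i < n" for i
    using that unfolding L_def by simp
  have "set L \<subseteq> set S"
    using len set_P unfolding L_def by auto
  with tern have "ternary L" unfolding ternary_def by blast
  moreover have "sorted L"
    unfolding L_def by (rule suffix_array_first_letters_sorted[OF sa])
  ultimately have L_blocks: "L ! i = block_letter cut1 cut2 i" if "i < n" for i
    using that cuts_bounds suffix_array_letter_less_at_cuts[OF sa] L_nth
    by (intro sorted_ternary_eq_block_letter) (auto simp: L_def)
  show "length S = length (assoc_string P k)" using len length_assoc_string by simp
  fix t
  assume "t < length S"
  then have j: "t + 1 \<in> {1..n}" using len by simp
  then have "pos P (t + 1) < n" "P ! pos P (t + 1) = t + 1"
    using nth_pos[of "t + 1" P] set_P by auto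
  then show "S ! t = assoc_string P k ! t"
    using L_nth L_blocks nth_assoc_string[OF j] by (metis add_diff_cancel_right')
qed

end

theorem theorem7:
  fixes P :: "nat list" and k :: nat
  assumes "length P \<ge> 2"
    and "arith_prog_perm P k"
    and "hd P \<notin> {1, k + 1, length P}"
  shows "length (assoc_string P k) = length P \<and> ternary (assoc_string P k) \<and>
         is_suffix_array (assoc_string P k) P \<and>
         (\<forall>S. length S = length P \<and> ternary S \<and> is_suffix_array S P \<longrightarrow> S = assoc_string P k)"
proof -
  interpret ternary_arith_prog_permutation P k
    using assms(2,3) by unfold_locales
  show ?thesis
    using length_assoc_string ternary_assoc_string is_suffix_array_assoc_string suffix_array_unique
    by blast
qed

end
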